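(* For the $n\times n$ identity matrix $I_n$ (with $n\ge 2$), $\mathsf{m}^{rd}(+\infty,I_n)\le\frac{n}{3n-4}$.
   Context: For $A\in\{0,1\}^{N\times n}$ and $m\ge0$, unit vectors $U_1,\dots,U_N,V_1,\dots,V_n\in\mathbb{R}^d$ form a margin-$m$, relative-bias-$0$ embedding of $A$ if $\langle U_j,V_i\rangle\ge m$ whenever $A_{ji}=1$ and $\langle U_j,V_i\rangle\le -m$ whenever $A_{ji}=0$. $\mathsf{m}^{rd}(d,A)$ is the supremum of such $m$ in dimension $d$, and $\mathsf{m}^{rd}(+\infty,A)=\sup_d\mathsf{m}^{rd}(d,A)$. *)

theory Defs
  imports "HOL-Analysis.Analysis"
begin

text \<open>Vectors in R^d are represented as functions nat => real, only coordinates k < d matter.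
  A 0/1 matrix of size N x n is a predicate A j i (True = entry 1) for j < N, i < n.\<close>

definition dinner :: "nat \<Rightarrow> (nat \<Rightarrow> real) \<Rightarrow> (nat \<Rightarrow> real) \<Rightarrow> real" where
  "dinner d x y = (\<Sum>k<d. x k * y k)"

definition is_unit :: "nat \<Rightarrow> (nat \<Rightarrow> real) \<Rightarrow> bool" where
  "is_unit d x \<longleftrightarrow> dinner d x x = 1"

text \<open>margin-m, relative-bias-0 embedding of A in dimension d\<close>
definition rd_embedding ::
  "nat \<Rightarrow> nat \<Rightarrow> nat \<Rightarrow> (nat \<Rightarrow> nat \<Rightarrow> bool) \<Rightarrow> real
     \<Rightarrow> (nat \<Rightarrow> nat \<Rightarrow> real) \<Rightarrow> (nat \<Rightarrow> nat \<Rightarrow> real) \<Rightarrow> bool" where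
  "rd_embedding d N n A m U V \<longleftrightarrow>
     (\<forall>j<N. is_unit d (U j)) \<and> (\<forall>i<n. is_unit d (V i)) \<and>
     (\<forall>j<N. \<forall>i<n. (A j i \<longrightarrow> dinner d (U j) (V i) \<ge> m) \<and>
                   (\<not> A j i \<longrightarrow> dinner d (U j) (V i) \<le> - m))"

definition mrd :: "nat \<Rightarrow> nat \<Rightarrow> nat \<Rightarrow> (nat \<Rightarrow> nat \<Rightarrow> bool) \<Rightarrow> real" where
  "mrd d N n A = Sup {m. m \<ge> 0 \<and> (\<exists>U V. rd_embedding d N n A m U V)}"

definition mrd_inf :: "nat \<Rightarrow> nat \<Rightarrow> (nat \<Rightarrow> nat \<Rightarrow> bool) \<Rightarrow> real" where
  "mrd_inf N n A = Sup {m. m \<ge> 0 \<and> (\<exists>d U V. rd_embedding d N n A m U V)}"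

definition id_mat :: "nat \<Rightarrow> nat \<Rightarrow> bool" where
  "id_mat j i \<longleftrightarrow> j = i"

end

theory Submission
  imports Defs
begin

(* Put W_i = n U_i - 2 (U_0 + ... + U_(n-1)). Expanding the squares, the cross terms cancel and
   sum_i |W_i|^2 = n^2 sum_i |U_i|^2 = n^3. On the other hand, for a margin-m embedding of the
   identity, <W_i, V_i> = (n - 2) <U_i, V_i> - 2 sum_(j ~= i) <U_j, V_i> >= (n - 2) m + 2 (n - 1) m,
   while 2n <W_i, V_i> <= |W_i|^2 + n^2 |V_i|^2 gives sum_i <W_i, V_i> <= n^2.
   Hence n (3n - 4) m <= n^2. *)

lemma dinner_diff_scaled_left:
  "dinner d (\<lambda>k. a * x k - b * y k) z = a * dinner d x z - b * dinner d y z"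
  unfolding dinner_def by (simp add: algebra_simps sum_subtractf sum_distrib_left)

lemma dinner_sum_left:
  "dinner d (\<lambda>k. \<Sum>j\<in>J. U j k) z = (\<Sum>j\<in>J. dinner d (U j) z)"
  unfolding dinner_def sum_distrib_right by (rule sum.swap)

lemma dinner_scaled_le:
  "2 * t * dinner d x y \<le> dinner d x x + t ^ 2 * dinner d y y"
proof -
  have "0 \<le> (\<Sum>k<d. (x k - t * y k) ^ 2)" by (simp add: sum_nonneg)
  also have "\<dots> = dinner d x x - 2 * t * dinner d x y + t ^ 2 * dinner d y y"
    unfolding dinner_def
    by (simp add: power2_eq_square algebra_simps sum.distrib sum_subtractf sum_distrib_left)
  finally show ?thesis by simp
qed

lemma sum_square_card_scaled_minus_twice_sum:
  fixes x :: "'a \<Rightarrow> real"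
  assumes "finite I"
  shows "(\<Sum>i\<in>I. (real (card I) * x i - 2 * sum x I) ^ 2) = real (card I) ^ 2 * (\<Sum>i\<in>I. (x i) ^ 2)"
proof -
  let ?c = "real (card I)" and ?s = "sum x I"
  have "(\<Sum>i\<in>I. (?c * x i - 2 * ?s) ^ 2) = (\<Sum>i\<in>I. ?c ^ 2 * (x i) ^ 2 - 4 * ?c * ?s * x i + 4 * ?s ^ 2)"
    by (rule sum.cong) (simp_all add: power2_eq_square algebra_simps)
  also have "\<dots> = ?c ^ 2 * (\<Sum>i\<in>I. (x i) ^ 2) - 4 * ?c * ?s * ?s + ?c * (4 * ?s ^ 2)"
    by (simp add: sum.distrib sum_subtractf sum_distrib_left[symmetric])
  finally show ?thesis by (simp add: power2_eq_square algebra_simps)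
qed

definition scaled_minus_twice_sum :: "nat \<Rightarrow> (nat \<Rightarrow> nat \<Rightarrow> real) \<Rightarrow> nat \<Rightarrow> nat \<Rightarrow> real" where
  "scaled_minus_twice_sum n U i = (\<lambda>k. real n * U i k - 2 * (\<Sum>j<n. U j k))"

lemma dinner_scaled_minus_twice_sum_left:
  "dinner d (scaled_minus_twice_sum n U i) z = real n * dinner d (U i) z - 2 * (\<Sum>j<n. dinner d (U j) z)"
  unfolding scaled_minus_twice_sum_def by (simp add: dinner_diff_scaled_left dinner_sum_left)

lemma sum_dinner_scaled_minus_twice_sum_self:
  "(\<Sum>i<n. dinner d (scaled_minus_twice_sum n U i) (scaled_minus_twice_sum n U i))
     = real n ^ 2 * (\<Sum>i<n. dinner d (U i) (U i))"
proof -
  have "(\<Sum>i<n. dinner d (scaled_minus_twice_sum n U i) (scaled_minus_twice_sum n U i))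
      = (\<Sum>k<d. \<Sum>i<n. (real n * U i k - 2 * (\<Sum>j<n. U j k)) ^ 2)"
    unfolding dinner_def scaled_minus_twice_sum_def power2_eq_square by (rule sum.swap)
  also have "\<dots> = (\<Sum>k<d. real n ^ 2 * (\<Sum>i<n. (U i k) ^ 2))"
    using sum_square_card_scaled_minus_twice_sum[of "{..<n}"] by simp
  also have "\<dots> = real n ^ 2 * (\<Sum>i<n. dinner d (U i) (U i))"
    unfolding dinner_def power2_eq_square sum_distrib_left by (rule sum.swap)
  finally show ?thesis .
qed

lemma sum_dinner_scaled_minus_twice_sum_le:
  assumes "\<forall>j<n. is_unit d (U j)" and "\<forall>i<n. is_unit d (V i)"
  shows "(\<Sum>i<n. dinner d (scaled_minus_twice_sum n U i) (V i)) \<le> real n ^ 2"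
proof (cases "n = 0")
  case False
  have "2 * real n * (\<Sum>i<n. dinner d (scaled_minus_twice_sum n U i) (V i))
      = (\<Sum>i<n. 2 * real n * dinner d (scaled_minus_twice_sum n U i) (V i))"
    by (simp add: sum_distrib_left)
  also have "\<dots> \<le> (\<Sum>i<n. dinner d (scaled_minus_twice_sum n U i) (scaled_minus_twice_sum n U i)
                         + real n ^ 2 * dinner d (V i) (V i))"
    by (rule sum_mono) (rule dinner_scaled_le)
  also have "\<dots> = 2 * real n * real n ^ 2"
    using assms by (simp add: sum.distrib sum_dinner_scaled_minus_twice_sum_self is_unit_def)
  finally show ?thesis using False by simp
qed simp

lemma rd_embedding_id_mat_dinner_scaled_minus_twice_sum_ge:
  assumes "n \<ge> 2" and "rd_embedding d n n id_mat m U V" and "i < n"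
  shows "(3 * real n - 4) * m \<le> dinner d (scaled_minus_twice_sum n U i) (V i)"
proof -
  have diag: "m \<le> dinner d (U i) (V i)"
    and off: "\<And>j. j < n \<Longrightarrow> j \<noteq> i \<Longrightarrow> dinner d (U j) (V i) \<le> - m"
    using assms(2,3) unfolding rd_embedding_def id_mat_def by auto
  have "(\<Sum>j\<in>{..<n}-{i}. dinner d (U j) (V i)) \<le> (\<Sum>j\<in>{..<n}-{i}. - m)"
    by (rule sum_mono) (use off in auto)
  also have "\<dots> = - (real n - 1) * m"
    using assms(3) by (simp add: of_nat_diff algebra_simps)
  finally have off_sum: "(\<Sum>j\<in>{..<n}-{i}. dinner d (U j) (V i)) \<le> - (real n - 1) * m" .
  have "(real n - 2) * m \<le> (real n - 2) * dinner d (U i) (V i)"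
    using diag assms(1) by (simp add: mult_left_mono)
  with off_sum assms(3) show ?thesis
    by (simp add: dinner_scaled_minus_twice_sum_left sum.remove[of "{..<n}" i] algebra_simps)
qed

lemma rd_embedding_id_mat_margin_le:
  assumes "n \<ge> 2" and "rd_embedding d n n id_mat m U V"
  shows "m \<le> real n / (3 * real n - 4)"
proof -
  have units: "\<forall>j<n. is_unit d (U j)" "\<forall>i<n. is_unit d (V i)"
    using assms(2) unfolding rd_embedding_def by auto
  have "real n * ((3 * real n - 4) * m) = (\<Sum>i<n. (3 * real n - 4) * m)" by simp
  also have "\<dots> \<le> (\<Sum>i<n. dinner d (scaled_minus_twice_sum n U i) (V i))"
    by (rule sum_mono) (use rd_embedding_id_mat_dinner_scaled_minus_twice_sum_ge[OF assms] in simp)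
  also have "\<dots> \<le> real n * real n"
    using sum_dinner_scaled_minus_twice_sum_le[OF units] by (simp add: power2_eq_square)
  finally have "(3 * real n - 4) * m \<le> real n"
    using assms(1) by (simp add: mult_le_cancel_left_pos)
  moreover have "3 * real n - 4 > 0" using assms(1) by simp
  ultimately show ?thesis by (simp add: field_simps mult.commute)
qed

lemma rd_embedding_id_mat_standard_basis:
  defines "e \<equiv> \<lambda>j k. if k = j then 1 else 0"
  shows "rd_embedding n n n id_mat 0 e e"
proof -
  have "dinner n (e j) (e i) = (if j = i then 1 else 0)" if "i < n" "j < n" for i j
    unfolding dinner_def e_def using that
    by (simp add: if_distrib[of "\<lambda>x. x * _"] sum.delta cong: if_cong)
  then show ?thesis
    unfolding rd_embedding_def is_unit_def id_mat_def by simp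
qed

theorem corollaryD1:
  fixes n :: nat
  assumes "n \<ge> 2"
  shows "mrd_inf n n id_mat \<le> real n / (3 * real n - 4)"
  unfolding mrd_inf_def
proof (rule cSup_least)
  show "{m. 0 \<le> m \<and> (\<exists>d U V. rd_embedding d n n id_mat m U V)} \<noteq> {}"
    using rd_embedding_id_mat_standard_basis by blast
qed (use rd_embedding_id_mat_margin_le[OF assms] in blast)

end
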